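(* Let $(A,\rhd,\lhd,\succ,\prec)$ be a finite-dimensional pre-dual pre-Poisson algebra with sub-adjacent dual pre-Poisson algebra $(A,\circ,[\cdot,\cdot])$, where $x\circ y=x\rhd y+x\lhd y$ and $[x,y]=x\succ y+x\prec y$. Let $\{e_1,\dots,e_n\}$ be a basis of $A$ and $\{e_1^*,\dots,e_n^*\}$ its dual basis. Let $\hat A=A\oplus A^*$ with operations $$(x+a^* )\circ(y+b^* )=x\circ y-L_{\rhd}^*(x)b^*+(-L_{\rhd}^*+R_{\lhd}^* )(y)a^*,$$ $$[x+a^*,y+b^*]=[x,y]+L_{\succ}^*(x)b^*-(L_{\succ}^*+R_{\prec}^* )(y)a^*,$$ for $x,y\in A$, $a^*,b^*\in A^*$ (this is a dual pre-Poisson algebra). Then $r=\sum_{i=1}^n(e_i\otimes e_i^*+e_i^*\otimes e_i)$ is a symmetric solution of the permutative-Leibniz Yang–Baxter equation in $\hat A$.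
   Context: Field $\mathbb{F}$ of characteristic $0$. For a bilinear operation $\diamond$, $L_\diamond(x)y=x\diamond y$, $R_\diamond(x)y=y\diamond x$; for $f:A\to\mathrm{End}(V)$ the dual $f^*:A\to\mathrm{End}(V^* )$ is $\langle f^*(x)v^*,u\rangle=-\langle v^*,f(x)u\rangle$. A pre-dual pre-Poisson algebra is a vector space $A$ with bilinear operations $\rhd,\lhd,\succ,\prec$ such that for all $x,y,z$: $x\lhd(y\lhd z+y\rhd z)=(x\lhd y)\lhd z=(y\rhd x)\lhd z=y\rhd(x\lhd z)$; $x\rhd(y\rhd z)=(x\lhd y+x\rhd y)\rhd z=(y\lhd x+y\rhd x)\rhd z$; $(x\prec y+x\succ y)\succ z=x\succ(y\succ z)-y\succ(x\succ z)$; $(x\succ y)\prec z=-(y\prec x)\prec z$; $x\prec(y\prec z+y\succ z)=(x\prec y)\prec z+y\succ(x\prec z)$; $x\prec(y\rhd z+y\lhd z)=(x\prec y)\lhd z+y\rhd(x\prec z)$; $x\succ(y\lhd z)=(x\succ y)\lhd z+y\lhd(x\succ z+x\prec z)$; $x\succ(y\rhd z)=(x\succ y+x\prec y)\rhd z+y\rhd(x\succ z)$; $(x\lhd y)\prec z=x\lhd(y\succ z+y\prec z)+y\rhd(x\prec z)$; $(x\rhd y+x\lhd y)\succ z=x\rhd(y\succ z)+y\rhd(x\succ z)$; $(x\rhd y-y\lhd x)\prec z=0$; $(x\succ y+y\prec x)\lhd z=0$; $(x\succ y+x\prec y+y\succ x+y\prec x)\rhd z=0$. A dual pre-Poisson algebra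 $(B,\circ,[\cdot,\cdot])$: $x\circ(y\circ z)=(x\circ y)\circ z=(y\circ x)\circ z$; $[x,[y,z]]=[[x,y],z]+[y,[x,z]]$; $[x,y\circ z]=[x,y]\circ z+y\circ[x,z]$; $[x\circ y,z]=x\circ[y,z]+y\circ[x,z]$; $[x,y]\circ z=-[y,x]\circ z$. PLYBE in a dual pre-Poisson algebra $B$: with $x\blacksquare y=x\circ y-y\circ x$, $x\square y=[x,y]+[y,x]$ and $r=\sum_i a_i\otimes b_i\in B\otimes B$, set $\mathbf{P}(r)=\sum_{i,j}\big(a_i\otimes a_j\otimes b_i\circ b_j-a_i\otimes b_i\circ a_j\otimes b_j+a_i\blacksquare a_j\otimes b_j\otimes b_i\big)$ and $\mathbf{L}(r)=\sum_{i,j}\big(a_i\otimes a_j\otimes[b_i,b_j]+a_i\otimes[b_i,a_j]\otimes b_j-a_i\square a_j\otimes b_i\otimes b_j\big)$; $r$ is a solution if $\mathbf{P}(r)=\mathbf{L}(r)=0$. Symmetric means invariant under the flip $u\otimes v\mapsto v\otimes u$. *)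

theory Defs
  imports Main "HOL-Library.Function_Algebras"
begin

text \<open>The finite-dimensional space A is 'n => 'k with 'n a finite
  index type ('k a field of characteristic 0). Its dual A* is also modelled as 'n => 'k,
  via the pairing below.\<close>

definition smul :: "'k::field \<Rightarrow> ('m \<Rightarrow> 'k) \<Rightarrow> ('m \<Rightarrow> 'k)" where
  "smul c x = (\<lambda>i. c * x i)"

definition pairing :: "('n::finite \<Rightarrow> 'k::field) \<Rightarrow> ('n \<Rightarrow> 'k) \<Rightarrow> 'k" where
  "pairing a u = (\<Sum>i\<in>UNIV. a i * u i)"

definition unitv :: "'n \<Rightarrow> 'n \<Rightarrow> 'k::field" where
  "unitv j = (\<lambda>i. if i = j then 1 else 0)"

text \<open>Dual of a linear map phi on A, acting on A*:
  pairing (dual_map phi a) u = - pairing a (phi u).\<close>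
definition dual_map :: "(('n::finite \<Rightarrow> 'k::field) \<Rightarrow> ('n \<Rightarrow> 'k)) \<Rightarrow> ('n \<Rightarrow> 'k) \<Rightarrow> ('n \<Rightarrow> 'k)" where
  "dual_map phi a = (\<lambda>j. - pairing a (phi (unitv j)))"

definition bilinear_op :: "(('m \<Rightarrow> 'k::field) \<Rightarrow> ('m \<Rightarrow> 'k) \<Rightarrow> ('m \<Rightarrow> 'k)) \<Rightarrow> bool" where
  "bilinear_op f \<longleftrightarrow>
     (\<forall>x y z. f (x + y) z = f x z + f y z) \<and>
     (\<forall>x y z. f x (y + z) = f x y + f x z) \<and>
     (\<forall>c x y. f (smul c x) y = smul c (f x y)) \<and>
     (\<forall>c x y. f x (smul c y) = smul c (f x y))"

definition is_basis :: "('n::finite \<Rightarrow> ('n \<Rightarrow> 'k::field)) \<Rightarrow> bool" where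
  "is_basis e \<longleftrightarrow> (\<forall>v. \<exists>!c. v = (\<Sum>i\<in>UNIV. smul (c i) (e i)))"

definition pre_dual_pre_Poisson ::
  "(('n \<Rightarrow> 'k::field) \<Rightarrow> ('n \<Rightarrow> 'k) \<Rightarrow> ('n \<Rightarrow> 'k)) \<Rightarrow>
   (('n \<Rightarrow> 'k) \<Rightarrow> ('n \<Rightarrow> 'k) \<Rightarrow> ('n \<Rightarrow> 'k)) \<Rightarrow>
   (('n \<Rightarrow> 'k) \<Rightarrow> ('n \<Rightarrow> 'k) \<Rightarrow> ('n \<Rightarrow> 'k)) \<Rightarrow>
   (('n \<Rightarrow> 'k) \<Rightarrow> ('n \<Rightarrow> 'k) \<Rightarrow> ('n \<Rightarrow> 'k)) \<Rightarrow> bool" where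
  "pre_dual_pre_Poisson rhd lhd succ prec \<longleftrightarrow>
    bilinear_op rhd \<and> bilinear_op lhd \<and> bilinear_op succ \<and> bilinear_op prec \<and>
    (\<forall>x y z.
      lhd x (lhd y z + rhd y z) = lhd (lhd x y) z \<and>
      lhd (lhd x y) z = lhd (rhd y x) z \<and>
      lhd (rhd y x) z = rhd y (lhd x z) \<and>
      rhd x (rhd y z) = rhd (lhd x y + rhd x y) z \<and>
      rhd (lhd x y + rhd x y) z = rhd (lhd y x + rhd y x) z \<and>
      succ (prec x y + succ x y) z = succ x (succ y z) - succ y (succ x z) \<and>
      prec (succ x y) z = - prec (prec y x) z \<and>
      prec x (prec y z + succ y z) = prec (prec x y) z + succ y (prec x z) \<and>
      prec x (rhd y z + lhd y z) = lhd (prec x y) z + rhd y (prec x z) \<and>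
      succ x (lhd y z) = lhd (succ x y) z + lhd y (succ x z + prec x z) \<and>
      succ x (rhd y z) = rhd (succ x y + prec x y) z + rhd y (succ x z) \<and>
      prec (lhd x y) z = lhd x (succ y z + prec y z) + rhd y (prec x z) \<and>
      succ (rhd x y + lhd x y) z = rhd x (succ y z) + rhd y (succ x z) \<and>
      prec (rhd x y - lhd y x) z = 0 \<and>
      lhd (succ x y + prec y x) z = 0 \<and>
      rhd (succ x y + prec x y + succ y x + prec y x) z = 0)"

text \<open>The double space A (+) A* modelled as ('n + 'n) => 'k (Inl: A-part, Inr: A*-part).\<close>
definition inA :: "('n \<Rightarrow> 'k::field) \<Rightarrow> ('n + 'n \<Rightarrow> 'k)" where
  "inA x = (\<lambda>p. case p of Inl i \<Rightarrow> x i | Inr _ \<Rightarrow> 0)"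
definition inD :: "('n \<Rightarrow> 'k::field) \<Rightarrow> ('n + 'n \<Rightarrow> 'k)" where
  "inD a = (\<lambda>p. case p of Inl _ \<Rightarrow> 0 | Inr i \<Rightarrow> a i)"
definition prA :: "('n + 'n \<Rightarrow> 'k) \<Rightarrow> ('n \<Rightarrow> 'k)" where
  "prA v = (\<lambda>i. v (Inl i))"
definition prD :: "('n + 'n \<Rightarrow> 'k) \<Rightarrow> ('n \<Rightarrow> 'k)" where
  "prD v = (\<lambda>i. v (Inr i))"

definition hat_circ ::
  "(('n::finite \<Rightarrow> 'k::field) \<Rightarrow> ('n \<Rightarrow> 'k) \<Rightarrow> ('n \<Rightarrow> 'k)) \<Rightarrow>
   (('n \<Rightarrow> 'k) \<Rightarrow> ('n \<Rightarrow> 'k) \<Rightarrow> ('n \<Rightarrow> 'k)) \<Rightarrow>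
   ('n + 'n \<Rightarrow> 'k) \<Rightarrow> ('n + 'n \<Rightarrow> 'k) \<Rightarrow> ('n + 'n \<Rightarrow> 'k)" where
  "hat_circ rhd lhd v w =
    (let x = prA v; a = prD v; y = prA w; b = prD w in
      inA (rhd x y + lhd x y) +
      inD (- dual_map (rhd x) b - dual_map (rhd y) a + dual_map (\<lambda>z. lhd z y) a))"

definition hat_br ::
  "(('n::finite \<Rightarrow> 'k::field) \<Rightarrow> ('n \<Rightarrow> 'k) \<Rightarrow> ('n \<Rightarrow> 'k)) \<Rightarrow>
   (('n \<Rightarrow> 'k) \<Rightarrow> ('n \<Rightarrow> 'k) \<Rightarrow> ('n \<Rightarrow> 'k)) \<Rightarrow>
   ('n + 'n \<Rightarrow> 'k) \<Rightarrow> ('n + 'n \<Rightarrow> 'k) \<Rightarrow> ('n + 'n \<Rightarrow> 'k)" where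
  "hat_br succ prec v w =
    (let x = prA v; a = prD v; y = prA w; b = prD w in
      inA (succ x y + prec x y) +
      inD (dual_map (succ x) b - dual_map (succ y) a - dual_map (\<lambda>z. prec z y) a))"

definition tens2 :: "('m \<Rightarrow> 'k::field) \<Rightarrow> ('m \<Rightarrow> 'k) \<Rightarrow> ('m \<times> 'm \<Rightarrow> 'k)" where
  "tens2 u v = (\<lambda>(p, q). u p * v q)"
definition tens3 :: "('m \<Rightarrow> 'k::field) \<Rightarrow> ('m \<Rightarrow> 'k) \<Rightarrow> ('m \<Rightarrow> 'k) \<Rightarrow> ('m \<times> 'm \<times> 'm \<Rightarrow> 'k)" where
  "tens3 u v w = (\<lambda>(p, q, s). u p * v q * w s)"

definition tensor_of :: "'i set \<Rightarrow> ('i \<Rightarrow> 'm \<Rightarrow> 'k::field) \<Rightarrow> ('i \<Rightarrow> 'm \<Rightarrow> 'k) \<Rightarrow> ('m \<times> 'm \<Rightarrow> 'k)" where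
  "tensor_of I a b = (\<Sum>i\<in>I. tens2 (a i) (b i))"

definition flip2 :: "('m \<times> 'm \<Rightarrow> 'k) \<Rightarrow> ('m \<times> 'm \<Rightarrow> 'k)" where
  "flip2 t = (\<lambda>(p, q). t (q, p))"

definition PLYBE_P ::
  "(('m \<Rightarrow> 'k::field) \<Rightarrow> ('m \<Rightarrow> 'k) \<Rightarrow> ('m \<Rightarrow> 'k)) \<Rightarrow>
   'i set \<Rightarrow> ('i \<Rightarrow> 'm \<Rightarrow> 'k) \<Rightarrow> ('i \<Rightarrow> 'm \<Rightarrow> 'k) \<Rightarrow> ('m \<times> 'm \<times> 'm \<Rightarrow> 'k)" where
  "PLYBE_P circ I a b =
    (\<Sum>i\<in>I. \<Sum>j\<in>I.
       tens3 (a i) (a j) (circ (b i) (b j))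
     - tens3 (a i) (circ (b i) (a j)) (b j)
     + tens3 (circ (a i) (a j) - circ (a j) (a i)) (b j) (b i))"

definition PLYBE_L ::
  "(('m \<Rightarrow> 'k::field) \<Rightarrow> ('m \<Rightarrow> 'k) \<Rightarrow> ('m \<Rightarrow> 'k)) \<Rightarrow>
   'i set \<Rightarrow> ('i \<Rightarrow> 'm \<Rightarrow> 'k) \<Rightarrow> ('i \<Rightarrow> 'm \<Rightarrow> 'k) \<Rightarrow> ('m \<times> 'm \<times> 'm \<Rightarrow> 'k)" where
  "PLYBE_L br I a b =
    (\<Sum>i\<in>I. \<Sum>j\<in>I.
       tens3 (a i) (a j) (br (b i) (b j))
     + tens3 (a i) (br (b i) (a j)) (b j)
     - tens3 (br (a i) (a j) + br (a j) (a i)) (b i) (b j))"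

definition is_PLYBE_solution ::
  "(('m \<Rightarrow> 'k::field) \<Rightarrow> ('m \<Rightarrow> 'k) \<Rightarrow> ('m \<Rightarrow> 'k)) \<Rightarrow>
   (('m \<Rightarrow> 'k) \<Rightarrow> ('m \<Rightarrow> 'k) \<Rightarrow> ('m \<Rightarrow> 'k)) \<Rightarrow>
   'i set \<Rightarrow> ('i \<Rightarrow> 'm \<Rightarrow> 'k) \<Rightarrow> ('i \<Rightarrow> 'm \<Rightarrow> 'k) \<Rightarrow> bool" where
  "is_PLYBE_solution circ br I a b \<longleftrightarrow> PLYBE_P circ I a b = 0 \<and> PLYBE_L br I a b = 0"

text \<open>The family presenting r = sum_i (e_i (x) e_i^* + e_i^* (x) e_i), indexed by 'n + 'n.\<close>
definition r_left :: "('n \<Rightarrow> 'n \<Rightarrow> 'k::field) \<Rightarrow> ('n \<Rightarrow> 'n \<Rightarrow> 'k) \<Rightarrow> 'n + 'n \<Rightarrow> ('n + 'n \<Rightarrow> 'k)" where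
  "r_left e es = (\<lambda>p. case p of Inl i \<Rightarrow> inA (e i) | Inr i \<Rightarrow> inD (es i))"
definition r_right :: "('n \<Rightarrow> 'n \<Rightarrow> 'k::field) \<Rightarrow> ('n \<Rightarrow> 'n \<Rightarrow> 'k) \<Rightarrow> 'n + 'n \<Rightarrow> ('n + 'n \<Rightarrow> 'k)" where
  "r_right e es = (\<lambda>p. case p of Inl i \<Rightarrow> inD (es i) | Inr i \<Rightarrow> inA (e i))"

end

theory Submission
  imports Defs
begin

(* Let B be the natural symmetric pairing of A + A^* and X_p the basis dual, under B, to the
   coordinate basis. By bilinearity, the (p,q,s)-coordinate of P(r) depends on r only through
   its rows and columns, and for r = sum_i (e_i (x) e_i^* + e_i^* (x) e_i) all of these are X_p.
   Hence P(r)_pqs = B(X_p o X_q, X_s) - B(X_p o X_s, X_q) + B(X_s o X_q, X_p) - B(X_q o X_s, X_p),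
   and similarly for L(r). For the operations of the double these invariance defects vanish
   identically: once each coadjoint action is moved across the pairing, the terms cancel in
   pairs. *)

lemma sum_fun_apply: "(\<Sum>i\<in>I. f i) x = (\<Sum>i\<in>I. f i x)"
  by (induction I rule: infinite_finite_induct) auto

lemma smul_apply [simp]: "smul c x i = c * x i"
  by (simp add: smul_def)

definition linear_op :: "(('m \<Rightarrow> 'k::field) \<Rightarrow> ('m \<Rightarrow> 'k)) \<Rightarrow> bool" where
  "linear_op \<phi> \<longleftrightarrow> (\<forall>x y. \<phi> (x + y) = \<phi> x + \<phi> y) \<and> (\<forall>c x. \<phi> (smul c x) = smul c (\<phi> x))"

lemma bilinear_op_linear_op:
  assumes "bilinear_op f"
  shows linear_op_right: "linear_op (f x)" and linear_op_left: "linear_op (\<lambda>z. f z y)"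
  using assms by (simp_all add: bilinear_op_def linear_op_def)

lemma linear_op_zero:
  assumes "linear_op \<phi>"
  shows "\<phi> 0 = 0"
proof -
  have "\<phi> (0 + 0) = \<phi> 0 + \<phi> 0"
    using assms by (simp only: linear_op_def)
  then show ?thesis by simp
qed

lemma linear_op_sum:
  assumes "linear_op \<phi>"
  shows "\<phi> (\<Sum>i\<in>I. smul (c i) (x i)) = (\<Sum>i\<in>I. smul (c i) (\<phi> (x i)))"
  using linear_op_zero[OF assms] assms[unfolded linear_op_def]
  by (induction I rule: infinite_finite_induct) simp_all

lemma smul_sum: "smul c (\<Sum>j\<in>J. v j) = (\<Sum>j\<in>J. smul c (v j))"
  by (simp add: fun_eq_iff sum_fun_apply sum_distrib_left)

lemma bilinear_op_sum_sum_apply: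
  assumes "bilinear_op f"
  shows "f (\<Sum>i\<in>I. smul (c i) (x i)) (\<Sum>j\<in>J. smul (d j) (y j)) z
       = (\<Sum>i\<in>I. \<Sum>j\<in>J. c i * d j * f (x i) (y j) z)"
  by (simp add: linear_op_sum[OF linear_op_left[OF assms]] linear_op_sum[OF linear_op_right[OF assms]]
      smul_sum sum_fun_apply mult.commute[of "d _"] mult.assoc sum.swap[of _ J])

lemma pairing_add_left: "pairing (a + b) x = pairing a x + pairing b x"
  and pairing_diff_left: "pairing (a - b) x = pairing a x - pairing b x"
  and pairing_uminus_left: "pairing (- a) x = - pairing a x"
  and pairing_add_right: "pairing a (x + y) = pairing a x + pairing a y"
  by (simp_all add: pairing_def algebra_simps sum.distrib sum_subtractf sum_negf)

lemma pairing_zero_left: "pairing 0 x = 0"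
  and pairing_zero_right: "pairing a 0 = 0"
  by (simp_all add: pairing_def)

lemma pairing_unitv_left: "pairing (unitv i) x = x i"
  and pairing_unitv_right: "pairing a (unitv i) = a i"
  by (simp_all add: pairing_def unitv_def if_distrib[of "(*) _"] if_distrib[of "\<lambda>c. c * _"] sum.delta
      cong: if_cong)

lemma pairing_sum_right: "pairing a (\<Sum>i\<in>I. smul (c i) (x i)) = (\<Sum>i\<in>I. c i * pairing a (x i))"
  by (simp add: pairing_def sum_fun_apply sum_distrib_left sum.swap[of _ UNIV] algebra_simps)

lemma unitv_expansion: "(x :: 'n::finite \<Rightarrow> 'k::field) = (\<Sum>j\<in>UNIV. smul (x j) (unitv j))"
  by (simp add: fun_eq_iff sum_fun_apply unitv_def if_distrib[of "(*) _"] sum.delta' cong: if_cong)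

lemma pairing_dual_map:
  assumes "linear_op \<phi>"
  shows "pairing (dual_map \<phi> a) x = - pairing a (\<phi> x)"
proof -
  have "pairing (dual_map \<phi> a) x = - (\<Sum>j\<in>UNIV. x j * pairing a (\<phi> (unitv j)))"
    unfolding dual_map_def by (subst pairing_def) (simp add: sum_negf mult.commute)
  also have "\<dots> = - pairing a (\<phi> (\<Sum>j\<in>UNIV. smul (x j) (unitv j)))"
    by (simp add: linear_op_sum[OF assms] pairing_sum_right)
  finally show ?thesis
    by (simp flip: unitv_expansion)
qed

lemma prA_apply: "prA v i = v (Inl i)"
  and prD_apply: "prD v i = v (Inr i)"
  by (simp_all add: prA_def prD_def)

lemma inA_apply [simp]: "inA x (Inl i) = x i" "inA x (Inr i) = 0"
  and inD_apply [simp]: "inD a (Inl i) = 0" "inD a (Inr i) = a i"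
  by (simp_all add: inA_def inD_def)

lemma prA_inA [simp]: "prA (inA x) = x"
  and prD_inA [simp]: "prD (inA x) = 0"
  and prA_inD [simp]: "prA (inD a) = 0"
  and prD_inD [simp]: "prD (inD a) = a"
  by (simp_all add: prA_def prD_def inA_def inD_def fun_eq_iff)

lemma prA_add: "prA (v + w) = prA v + prA w"
  and prD_add: "prD (v + w) = prD v + prD w"
  and prA_smul: "prA (smul c v) = smul c (prA v)"
  and prD_smul: "prD (smul c v) = smul c (prD v)"
  by (simp_all add: prA_def prD_def fun_eq_iff)

lemma inA_add: "inA (x + y) = inA x + inA y"
  and inA_smul: "inA (smul c x) = smul c (inA x)"
  and inD_add: "inD (a + b) = inD a + inD b"
  and inD_diff: "inD (a - b) = inD a - inD b"
  and inD_uminus: "inD (- a) = - inD a"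
  and inD_smul: "inD (smul c a) = smul c (inD a)"
  by (simp_all add: inA_def inD_def fun_eq_iff split: sum.split)

lemma smul_add: "smul c (x + y) = smul c x + smul c y"
  and smul_diff: "smul c (x - y) = smul c x - smul c y"
  and smul_uminus: "smul c (- x) = - smul c x"
  by (simp_all add: smul_def fun_eq_iff algebra_simps)

lemma dual_map_add: "dual_map \<phi> (a + b) = dual_map \<phi> a + dual_map \<phi> b"
  and dual_map_smul: "dual_map \<phi> (smul c a) = smul c (dual_map \<phi> a)"
  and dual_map_add_fun: "dual_map (\<lambda>z. \<phi> z + \<psi> z) a = dual_map \<phi> a + dual_map \<psi> a"
  and dual_map_smul_fun: "dual_map (\<lambda>z. smul c (\<phi> z)) a = smul c (dual_map \<phi> a)"
  by (simp_all add: dual_map_def pairing_def fun_eq_iff sum.distrib sum_distrib_left algebra_simps)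

lemma bilinear_op_fun:
  assumes "bilinear_op f"
  shows "f (x + y) = (\<lambda>z. f x z + f y z)" "f (smul c x) = (\<lambda>z. smul c (f x z))"
  using assms by (auto simp: bilinear_op_def)

lemmas double_space_linear_simps =
  prA_add prD_add prA_smul prD_smul inA_add inA_smul inD_add inD_diff inD_uminus inD_smul
  smul_add smul_diff smul_uminus dual_map_add dual_map_smul dual_map_add_fun dual_map_smul_fun

lemma hat_circ_bilinear:
  assumes "bilinear_op rhd" "bilinear_op lhd"
  shows "bilinear_op (hat_circ rhd lhd)"
  using assms[unfolded bilinear_op_def]
  unfolding bilinear_op_def hat_circ_def Let_def
  by (simp add: double_space_linear_simps bilinear_op_fun[OF assms(1)] algebra_simps)

lemma hat_br_bilinear:
  assumes "bilinear_op succ" "bilinear_op prec"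
  shows "bilinear_op (hat_br succ prec)"
  using assms[unfolded bilinear_op_def]
  unfolding bilinear_op_def hat_br_def Let_def
  by (simp add: double_space_linear_simps bilinear_op_fun[OF assms(1)] algebra_simps)

definition double_pairing :: "('n::finite + 'n \<Rightarrow> 'k::field) \<Rightarrow> ('n + 'n \<Rightarrow> 'k) \<Rightarrow> 'k" where
  "double_pairing v w = pairing (prD v) (prA w) + pairing (prD w) (prA v)"

lemma hat_circ_invariant:
  assumes "bilinear_op rhd" "bilinear_op lhd"
  shows "double_pairing (hat_circ rhd lhd u v) w - double_pairing (hat_circ rhd lhd u w) v
       + double_pairing (hat_circ rhd lhd w v) u - double_pairing (hat_circ rhd lhd v w) u = 0"
  unfolding double_pairing_def hat_circ_def Let_def
  by (simp add: prA_add prD_add pairing_add_left pairing_diff_left pairing_uminus_left pairing_add_right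
      pairing_dual_map[OF linear_op_right[OF assms(1)]] pairing_dual_map[OF linear_op_left[OF assms(2)]])

lemma hat_br_invariant:
  assumes "bilinear_op succ" "bilinear_op prec"
  shows "double_pairing (hat_br succ prec u v) w + double_pairing (hat_br succ prec u w) v
       - double_pairing (hat_br succ prec v w) u - double_pairing (hat_br succ prec w v) u = 0"
  unfolding double_pairing_def hat_br_def Let_def
  by (simp add: prA_add prD_add pairing_add_left pairing_diff_left pairing_uminus_left pairing_add_right
      pairing_dual_map[OF linear_op_right[OF assms(1)]] pairing_dual_map[OF linear_op_left[OF assms(2)]])

definition tensor_row :: "('m \<times> 'm \<Rightarrow> 'k) \<Rightarrow> 'm \<Rightarrow> ('m \<Rightarrow> 'k)" where
  "tensor_row t p = (\<lambda>q. t (p, q))"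

definition tensor_col :: "('m \<times> 'm \<Rightarrow> 'k) \<Rightarrow> 'm \<Rightarrow> ('m \<Rightarrow> 'k)" where
  "tensor_col t s = (\<lambda>p. t (p, s))"

lemma tensor_row_tensor_of: "tensor_row (tensor_of I a b) p = (\<Sum>i\<in>I. smul (a i p) (b i))"
  and tensor_col_tensor_of: "tensor_col (tensor_of I a b) s = (\<Sum>i\<in>I. smul (b i s) (a i))"
  by (simp_all add: tensor_row_def tensor_col_def tensor_of_def tens2_def fun_eq_iff sum_fun_apply mult.commute)

lemma PLYBE_P_apply:
  assumes "bilinear_op f" and "tensor_of I a b = t"
  shows "PLYBE_P f I a b (p, q, s) =
      f (tensor_row t p) (tensor_row t q) s - f (tensor_row t p) (tensor_col t s) q
    + f (tensor_col t s) (tensor_col t q) p - f (tensor_col t q) (tensor_col t s) p"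
proof -
  have "f (tensor_col t q) (tensor_col t s) p = (\<Sum>i\<in>I. \<Sum>j\<in>I. b j q * b i s * f (a j) (a i) p)"
    unfolding assms(2)[symmetric] tensor_col_tensor_of bilinear_op_sum_sum_apply[OF assms(1)]
    by (rule sum.swap)
  then show ?thesis
    unfolding assms(2)[symmetric] tensor_row_tensor_of tensor_col_tensor_of bilinear_op_sum_sum_apply[OF assms(1)]
    by (simp add: PLYBE_P_def tens3_def sum_fun_apply sum_subtractf sum.distrib right_diff_distrib mult_ac)
qed

lemma PLYBE_L_apply:
  assumes "bilinear_op f" and "tensor_of I a b = t"
  shows "PLYBE_L f I a b (p, q, s) =
      f (tensor_row t p) (tensor_row t q) s + f (tensor_row t p) (tensor_col t s) q
    - f (tensor_col t q) (tensor_col t s) p - f (tensor_col t s) (tensor_col t q) p"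
proof -
  have "f (tensor_col t s) (tensor_col t q) p = (\<Sum>i\<in>I. \<Sum>j\<in>I. b j s * b i q * f (a j) (a i) p)"
    unfolding assms(2)[symmetric] tensor_col_tensor_of bilinear_op_sum_sum_apply[OF assms(1)]
    by (rule sum.swap)
  then show ?thesis
    unfolding assms(2)[symmetric] tensor_row_tensor_of tensor_col_tensor_of bilinear_op_sum_sum_apply[OF assms(1)]
    by (simp add: PLYBE_L_def tens3_def sum_fun_apply sum_subtractf sum.distrib right_diff_distrib
        distrib_left mult_ac)
qed

definition sum_swap :: "'a + 'a \<Rightarrow> 'a + 'a" where
  "sum_swap = case_sum Inr Inl"

lemma sum_swap_simps [simp]: "sum_swap (Inl i) = Inr i" "sum_swap (Inr i) = Inl i"
  by (simp_all add: sum_swap_def)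

lemma sum_swap_eq_iff: "q = sum_swap p \<longleftrightarrow> p = sum_swap q"
  by (cases p; cases q) auto

(* The coordinates of sum_i (e_i (x) e_i^* + e_i^* (x) e_i), which do not depend on the basis. *)
definition canonical_tensor :: "('n + 'n) \<times> ('n + 'n) \<Rightarrow> 'k::field" where
  "canonical_tensor = (\<lambda>(p, q). unitv (sum_swap p) q)"

lemma canonical_tensor_symmetric: "flip2 canonical_tensor = canonical_tensor"
  by (auto simp: flip2_def canonical_tensor_def unitv_def sum_swap_eq_iff)

lemma tensor_row_canonical_tensor: "tensor_row canonical_tensor p = unitv (sum_swap p)"
  and tensor_col_canonical_tensor: "tensor_col canonical_tensor p = unitv (sum_swap p)"
  by (auto simp: tensor_row_def tensor_col_def canonical_tensor_def unitv_def sum_swap_eq_iff)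

lemma unitv_Inl: "unitv (Inl i) = inA (unitv i)"
  and unitv_Inr: "unitv (Inr i) = inD (unitv i)"
  by (simp_all add: unitv_def inA_def inD_def fun_eq_iff split: sum.split)

lemma double_pairing_unitv_sum_swap: "double_pairing v (unitv (sum_swap p)) = v p"
  by (cases p) (simp_all add: double_pairing_def unitv_Inl unitv_Inr pairing_zero_left pairing_zero_right
      pairing_unitv_left pairing_unitv_right prA_apply prD_apply)

lemma PLYBE_P_canonical_tensor_eq_0:
  assumes "bilinear_op f" and "tensor_of I a b = canonical_tensor"
    and invariant: "\<And>u v w. double_pairing (f u v) w - double_pairing (f u w) v
                           + double_pairing (f w v) u - double_pairing (f v w) u = 0"
  shows "PLYBE_P f I a b = 0"
proof -
  have "PLYBE_P f I a b (p, q, s) = 0" for p q s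
    using invariant[of "unitv (sum_swap p)" "unitv (sum_swap q)" "unitv (sum_swap s)"]
    by (simp add: PLYBE_P_apply[OF assms(1,2)] tensor_row_canonical_tensor tensor_col_canonical_tensor
        double_pairing_unitv_sum_swap)
  then show ?thesis
    by (auto simp: fun_eq_iff)
qed

lemma PLYBE_L_canonical_tensor_eq_0:
  assumes "bilinear_op f" and "tensor_of I a b = canonical_tensor"
    and invariant: "\<And>u v w. double_pairing (f u v) w + double_pairing (f u w) v
                           - double_pairing (f v w) u - double_pairing (f w v) u = 0"
  shows "PLYBE_L f I a b = 0"
proof -
  have "PLYBE_L f I a b (p, q, s) = 0" for p q s
    using invariant[of "unitv (sum_swap p)" "unitv (sum_swap q)" "unitv (sum_swap s)"]
    by (simp add: PLYBE_L_apply[OF assms(1,2)] tensor_row_canonical_tensor tensor_col_canonical_tensor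
        double_pairing_unitv_sum_swap)
  then show ?thesis
    by (auto simp: fun_eq_iff)
qed

lemma sum_UNIV_Plus:
  "(\<Sum>p\<in>UNIV. g p) = (\<Sum>i\<in>(UNIV::'a::finite set). g (Inl i)) + (\<Sum>i\<in>(UNIV::'b::finite set). g (Inr i))"
  by (simp add: sum.Plus flip: UNIV_Plus_UNIV)

lemma dual_basis_completeness:
  assumes "is_basis e" and "\<forall>i j. pairing (es i) (e j) = (if i = j then 1 else 0)"
  shows "(\<Sum>i\<in>UNIV. e i p * es i q) = (if p = q then 1 else 0)"
proof -
  obtain c where c: "unitv q = (\<Sum>i\<in>UNIV. smul (c i) (e i))"
    using assms(1) unfolding is_basis_def by blast
  have "c j = es j q" for j
  proof -
    have "c j = pairing (es j) (unitv q)"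
      using assms(2) by (simp add: c pairing_sum_right if_distrib[of "(*) _"] cong: if_cong)
    then show ?thesis
      by (simp add: pairing_unitv_right)
  qed
  then have "unitv q p = (\<Sum>i\<in>UNIV. e i p * es i q)"
    by (simp add: c sum_fun_apply mult.commute)
  then show ?thesis
    by (simp add: unitv_def eq_commute)
qed

lemma tensor_of_r_left_r_right:
  assumes "is_basis e" and "\<forall>i j. pairing (es i) (e j) = (if i = j then 1 else 0)"
  shows "tensor_of UNIV (r_left e es) (r_right e es) = canonical_tensor"
proof -
  have "tensor_of UNIV (r_left e es) (r_right e es) (p, q) = unitv (sum_swap p) q" for p q
    using dual_basis_completeness[OF assms]
    by (cases p; cases q)
       (simp_all add: tensor_of_def tens2_def sum_fun_apply sum_UNIV_Plus r_left_def r_right_def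
        unitv_def mult.commute)
  then show ?thesis
    by (auto simp: fun_eq_iff canonical_tensor_def)
qed

theorem corollary3p31:
  fixes rhd lhd succ prec :: "('n::finite \<Rightarrow> 'k::field_char_0) \<Rightarrow> ('n \<Rightarrow> 'k) \<Rightarrow> ('n \<Rightarrow> 'k)"
    and e es :: "'n \<Rightarrow> 'n \<Rightarrow> 'k"
  assumes "pre_dual_pre_Poisson rhd lhd succ prec"
    and "is_basis e"
    and "\<forall>i j. pairing (es i) (e j) = (if i = j then 1 else 0)"
  shows "is_PLYBE_solution (hat_circ rhd lhd) (hat_br succ prec) UNIV (r_left e es) (r_right e es)
       \<and> flip2 (tensor_of UNIV (r_left e es) (r_right e es)) = tensor_of UNIV (r_left e es) (r_right e es)"
proof -
  have bilinear: "bilinear_op rhd" "bilinear_op lhd" "bilinear_op succ" "bilinear_op prec"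
    using assms(1) by (simp_all add: pre_dual_pre_Poisson_def)
  have r: "tensor_of UNIV (r_left e es) (r_right e es) = canonical_tensor"
    using tensor_of_r_left_r_right[OF assms(2,3)] .
  have "PLYBE_P (hat_circ rhd lhd) UNIV (r_left e es) (r_right e es) = 0"
    using PLYBE_P_canonical_tensor_eq_0[OF hat_circ_bilinear[OF bilinear(1,2)] r]
      hat_circ_invariant[OF bilinear(1,2)] by blast
  moreover have "PLYBE_L (hat_br succ prec) UNIV (r_left e es) (r_right e es) = 0"
    using PLYBE_L_canonical_tensor_eq_0[OF hat_br_bilinear[OF bilinear(3,4)] r]
      hat_br_invariant[OF bilinear(3,4)] by blast
  ultimately show ?thesis
    by (simp add: is_PLYBE_solution_def r canonical_tensor_symmetric)
qed

end
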